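(* Let $\phi\colon\mathcal{A}^+\to\mathcal{C}^+$ and $\tau\colon\mathcal{B}^+\to\mathcal{C}^+$ be morphisms such that $\tau$ is $\ell$-proper with $\ell\ge|\phi|_1^4$, and $\phi(\mathcal{A}^+)\cap\tau(\mathcal{B}^{++})\neq\emptyset$. Then there exist an alphabet $\mathcal{D}$ and morphisms $q\colon\mathcal{B}^+\to\mathcal{D}^+$, $p\colon\mathcal{D}^+\to\mathcal{C}^+$ such that (i) $\#\mathcal{D}\le\#\mathcal{A}$, (ii) $\tau=pq$, and (iii) $q$ is letter-onto and proper.
   Context: Alphabets are finite sets; $\mathcal{A}^+$ is the free semigroup of nonempty finite words over $\mathcal{A}$, and a morphism is a semigroup homomorphism. $\mathcal{B}^{++}$ denotes the set of words in $\mathcal{B}^+$ in which every letter of $\mathcal{B}$ occurs. For a morphism $\sigma\colon\mathcal{A}^+\to\mathcal{B}^+$, $|\sigma|_1=\sum_{a\in\mathcal{A}}|\sigma(a)|$. $\sigma$ is $r$-proper if there exist $u,v\in\mathcal{B}^r$ such that every $\sigma(a)$, $a\in\mathcal{A}$, starts with $u$ and ends with $v$; proper means $1$-proper; letter-onto means every $b\in\mathcal{B}$ occurs in some $\sigma(a)$. *)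

theory Defs
  imports Main "HOL-Library.Sublist"
begin

text \<open>Words over an alphabet (a finite set) are lists. A morphism
  sigma : A^+ -> B^+ is determined by its values on letters, each a nonempty word over B.\<close>

definition plus :: "'a set \<Rightarrow> 'a list set" where
  "plus A = {w. w \<noteq> [] \<and> set w \<subseteq> A}"

definition plusplus :: "'a set \<Rightarrow> 'a list set" where
  "plusplus A = {w \<in> plus A. A \<subseteq> set w}"

definition morph :: "'a set \<Rightarrow> 'b set \<Rightarrow> ('a \<Rightarrow> 'b list) \<Rightarrow> bool" where
  "morph A B \<sigma> \<longleftrightarrow> (\<forall>a\<in>A. \<sigma> a \<in> plus B)"

definition ext :: "('a \<Rightarrow> 'b list) \<Rightarrow> 'a list \<Rightarrow> 'b list" where
  "ext \<sigma> w = concat (map \<sigma> w)"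

definition size1 :: "'a set \<Rightarrow> ('a \<Rightarrow> 'b list) \<Rightarrow> nat" where
  "size1 A \<sigma> = (\<Sum>a\<in>A. length (\<sigma> a))"

definition r_proper :: "nat \<Rightarrow> 'a set \<Rightarrow> 'b set \<Rightarrow> ('a \<Rightarrow> 'b list) \<Rightarrow> bool" where
  "r_proper r A B \<sigma> \<longleftrightarrow> (\<exists>u v. length u = r \<and> length v = r \<and> set u \<subseteq> B \<and> set v \<subseteq> B \<and>
      (\<forall>a\<in>A. prefix u (\<sigma> a) \<and> suffix v (\<sigma> a)))"

definition proper :: "'a set \<Rightarrow> 'b set \<Rightarrow> ('a \<Rightarrow> 'b list) \<Rightarrow> bool" where
  "proper A B \<sigma> \<longleftrightarrow> r_proper 1 A B \<sigma>"

definition letter_onto :: "'a set \<Rightarrow> 'b set \<Rightarrow> ('a \<Rightarrow> 'b list) \<Rightarrow> bool" where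
  "letter_onto A B \<sigma> \<longleftrightarrow> (\<forall>b\<in>B. \<exists>a\<in>A. b \<in> set (\<sigma> a))"

end

(*
  Let X = phi(A), a set of at most #A nonempty words of total length K, so that l >= K^2
  (this is all the argument uses of l >= K^4).  Call X reducible if some set Y of at most #X
  nonempty words of smaller total length generates every word of X; then X can be replaced by Y,
  so by induction on K we may assume X irreducible.

  A relation between two X-factorizations with distinct first factors makes X reducible (a form
  of the defect theorem).  Hence every boundary between the blocks tau(b) of the common word
  tau(y) is also a boundary of its X-factorization: otherwise the prefix u of length l recurs at
  a position c strictly inside an X-block, and shifting the first K block boundaries by c either
  hits a block boundary or, by pigeonhole on (block, offset) pairs, hits the same offset of the
  same word twice; in both cases cutting one word of X in two produces such a relation.

  So every tau(b) factors over X.  The first factors of these factorizations are prefixes of u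
  of length at most l, hence comparable, hence equal by irreducibility; likewise the last factors.
  Numbering the words of X that occur yields q and p, and q is proper since all q(b) start with
  the same letter and end with the same letter.
*)
theory Submission
  imports Defs
begin

section \<open>Reducing a set of words\<close>

definition concats :: "'a list set \<Rightarrow> 'a list set" where
  "concats Y = concat ` lists Y"

definition total_length :: "'a list set \<Rightarrow> nat" where
  "total_length X = (\<Sum>x\<in>X. length x)"

definition reduces_to :: "'a list set \<Rightarrow> 'a list set \<Rightarrow> bool" where
  "reduces_to X Y \<longleftrightarrow> finite Y \<and> [] \<notin> Y \<and> card Y \<le> card X \<and>
     total_length Y < total_length X \<and> X \<subseteq> concats Y"

definition reducible :: "'a list set \<Rightarrow> bool" where
  "reducible X \<longleftrightarrow> (\<exists>Y. reduces_to X Y)"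

lemma concat_in_concats: "set xs \<subseteq> Y \<Longrightarrow> concat xs \<in> concats Y"
  unfolding concats_def by (simp add: lists_eq_set)

lemma in_concats: "x \<in> Y \<Longrightarrow> x \<in> concats Y"
  unfolding concats_def by (rule image_eqI[of _ _ "[x]"]) auto

lemma append_in_concats: "a \<in> concats Y \<Longrightarrow> b \<in> concats Y \<Longrightarrow> a @ b \<in> concats Y"
  unfolding concats_def by (auto intro!: image_eqI[of _ concat "_ @ _"])

lemma concats_subset:
  assumes "X \<subseteq> concats Y"
  shows "concats X \<subseteq> concats Y"
proof
  fix w assume "w \<in> concats X"
  then obtain zs where "zs \<in> lists X" "w = concat zs"
    by (auto simp: concats_def)
  then show "w \<in> concats Y"
  proof (induction zs arbitrary: w)
    case Nil
    then show ?case by (auto simp: concats_def intro: image_eqI[of _ _ "[]"])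
  next
    case (Cons z zs)
    then show ?case using assms by (auto intro: append_in_concats)
  qed
qed

lemma reduces_to_trans:
  assumes "reduces_to X Y" "reduces_to Y Z"
  shows "reduces_to X Z"
proof -
  have "X \<subseteq> concats Z"
    using assms concats_subset[of Y Z] unfolding reduces_to_def by blast
  then show ?thesis
    using assms unfolding reduces_to_def by simp
qed

lemma total_length_insert_le:
  "finite X \<Longrightarrow> total_length (insert a X) \<le> length a + total_length X"
  unfolding total_length_def by (cases "a \<in> X") (auto simp: insert_absorb)

lemma total_length_remove:
  "finite X \<Longrightarrow> x \<in> X \<Longrightarrow> total_length X = length x + total_length (X - {x})"
  unfolding total_length_def by (rule sum.remove)

lemma reduces_to_replace:
  assumes "finite X" "[] \<notin> X" "x \<in> X" "r \<noteq> []" "length r < length x"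
    and "x \<in> concats (insert r (X - {x}))"
  shows "reduces_to X (insert r (X - {x}))"
proof -
  let ?Y = "insert r (X - {x})"
  have "card ?Y \<le> Suc (card (X - {x}))"
    by (simp add: card_insert_le_m1)
  also have "\<dots> = card X"
    using card_Suc_Diff1 assms(1,3) .
  finally have "card ?Y \<le> card X" .
  moreover have "total_length ?Y < total_length X"
    using total_length_insert_le[of "X - {x}" r] total_length_remove[of X x] assms by simp
  moreover have "X \<subseteq> concats ?Y"
    using assms by (auto intro: in_concats)
  ultimately show ?thesis
    using assms unfolding reduces_to_def by auto
qed

lemma reduces_to_remainder:
  assumes "finite X" "[] \<notin> X" "x \<in> X" "y \<in> X" "y = x @ r \<or> y = r @ x" "r \<noteq> []"
  shows "reduces_to X (insert r (X - {y}))"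
proof (rule reduces_to_replace[OF assms(1,2,4,6)])
  show "length r < length y"
    using assms(2,3,5) by (cases x) auto
  have "x \<in> concats (insert r (X - {y}))" "r \<in> concats (insert r (X - {y}))"
    using assms(3,5,6) by (auto intro: in_concats)
  then show "y \<in> concats (insert r (X - {y}))"
    using assms(5) append_in_concats by metis
qed

lemma reducible_if_proper_prefix_or_suffix:
  assumes "finite X" "[] \<notin> X" "x \<in> X" "y \<in> X" "x \<noteq> y" "prefix x y \<or> suffix x y"
  shows "reducible X"
proof -
  obtain r where r: "y = x @ r \<or> y = r @ x"
    using assms(6) unfolding prefix_def suffix_def by blast
  moreover have "r \<noteq> []"
    using r assms(5) by auto
  ultimately show ?thesis
    using reduces_to_remainder[OF assms(1-4)] unfolding reducible_def by blast
qed

lemma reducible_if_prefixes_differ: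
  assumes "finite X" "[] \<notin> X" "x \<in> X" "y \<in> X" "x \<noteq> y" "prefix x w" "prefix y w"
  shows "reducible X"
  using prefix_same_cases[OF assms(6,7)] assms(3-5)
    reducible_if_proper_prefix_or_suffix[OF assms(1,2,3,4)]
    reducible_if_proper_prefix_or_suffix[OF assms(1,2,4,3)]
  by auto

lemma reducible_if_suffixes_differ:
  assumes "finite X" "[] \<notin> X" "x \<in> X" "y \<in> X" "x \<noteq> y" "suffix x w" "suffix y w"
  shows "reducible X"
  using suffix_same_cases[OF assms(6,7)] assms(3-5)
    reducible_if_proper_prefix_or_suffix[OF assms(1,2,3,4)]
    reducible_if_proper_prefix_or_suffix[OF assms(1,2,4,3)]
  by auto

definition replace :: "'a \<Rightarrow> 'a list \<Rightarrow> 'a list \<Rightarrow> 'a list" where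
  "replace x ws zs = concat (map (\<lambda>z. if z = x then ws else [z]) zs)"

lemma replace_Nil [simp]: "replace x ws [] = []"
  and replace_Cons [simp]: "replace x ws (z # zs) = (if z = x then ws else [z]) @ replace x ws zs"
  by (simp_all add: replace_def)

lemma concat_replace: "concat ws = x \<Longrightarrow> concat (replace x ws zs) = concat zs"
  by (induction zs) auto

lemma set_replace: "set (replace x ws zs) \<subseteq> set zs - {x} \<union> set ws"
  by (induction zs) auto

lemma relation_after_shortening:
  assumes "x1 \<in> X" "r \<notin> X" "r \<noteq> []" "set as \<subseteq> X" "set bs \<subseteq> X" "concat as = r @ concat bs"
  shows "\<exists>\<alpha> \<beta>. set \<alpha> \<subseteq> insert r (X - {x1 @ r}) \<and> set \<beta> \<subseteq> insert r (X - {x1 @ r}) \<and>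
    \<alpha> \<noteq> [] \<and> \<beta> \<noteq> [] \<and> concat \<alpha> = concat \<beta> \<and> hd \<alpha> \<noteq> hd \<beta>"
proof -
  let ?\<alpha> = "replace (x1 @ r) [x1, r] as" and ?\<beta> = "r # replace (x1 @ r) [x1, r] bs"
  have "concat ?\<alpha> = concat ?\<beta>"
    using assms(6) by (simp add: concat_replace)
  moreover have "set ?\<alpha> \<subseteq> insert r (X - {x1 @ r})" "set ?\<beta> \<subseteq> insert r (X - {x1 @ r})"
    using set_replace[of "x1 @ r" "[x1, r]" as] set_replace[of "x1 @ r" "[x1, r]" bs] assms(1,3-5)
    by auto
  moreover obtain a as' where as: "as = a # as'"
    using assms(3,6) by (cases as) auto
  then have "?\<alpha> \<noteq> []" "hd ?\<alpha> \<noteq> hd ?\<beta>"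
    using assms(1,2,4) by auto
  ultimately show ?thesis
    by blast
qed

lemma defect_theorem:
  assumes "finite X" "[] \<notin> X" "set \<alpha> \<subseteq> X" "set \<beta> \<subseteq> X" "\<alpha> \<noteq> []" "\<beta> \<noteq> []"
    and "concat \<alpha> = concat \<beta>" "hd \<alpha> \<noteq> hd \<beta>"
  shows "\<exists>Y. reduces_to X Y \<and> card Y < card X"
  using assms
proof (induction "total_length X" arbitrary: X \<alpha> \<beta> rule: less_induct)
  case less
  have shorter_head_first: "\<exists>Y. reduces_to X Y \<and> card Y < card X"
    if rel: "set \<alpha> \<subseteq> X" "set \<beta> \<subseteq> X" "\<alpha> \<noteq> []" "\<beta> \<noteq> []" "concat \<alpha> = concat \<beta>"
      "hd \<alpha> \<noteq> hd \<beta>" "prefix (hd \<alpha>) (hd \<beta>)" for \<alpha> \<beta>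
  proof -
    obtain x1 as x2 bs where \<alpha>: "\<alpha> = x1 # as" and \<beta>: "\<beta> = x2 # bs"
      using rel(3,4) by (meson neq_Nil_conv)
    obtain r where x2: "x2 = x1 @ r"
      using rel(7) unfolding \<alpha> \<beta> prefix_def by auto
    have X: "x1 \<in> X" "x2 \<in> X" "x1 \<noteq> x2"
      using rel(1,2,6) \<alpha> \<beta> by auto
    have "r \<noteq> []"
      using X x2 by auto
    let ?Y = "insert r (X - {x2})"
    have reduces: "reduces_to X ?Y"
      using reduces_to_remainder[OF less.prems(1,2) X(1,2) _ \<open>r \<noteq> []\<close>] x2 by blast
    show ?thesis
    proof (cases "r \<in> X")
      case True
      have "r \<noteq> x2"
        using X(1) x2 less.prems(2) by (cases x1) auto
      then have "?Y = X - {x2}"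
        using True by auto
      then have "card ?Y < card X"
        using card_Diff1_less[OF less.prems(1) X(2)] by simp
      then show ?thesis
        using reduces by blast
    next
      case False
      have "set as \<subseteq> X" "set bs \<subseteq> X" "concat as = r @ concat bs"
        using rel(1,2,5) \<alpha> \<beta> x2 by auto
      then obtain \<alpha>' \<beta>' where rel': "set \<alpha>' \<subseteq> ?Y" "set \<beta>' \<subseteq> ?Y" "\<alpha>' \<noteq> []" "\<beta>' \<noteq> []"
          "concat \<alpha>' = concat \<beta>'" "hd \<alpha>' \<noteq> hd \<beta>'"
        using relation_after_shortening[OF X(1) False \<open>r \<noteq> []\<close>] x2 by blast
      have Y: "total_length ?Y < total_length X" "finite ?Y" "[] \<notin> ?Y" "card ?Y \<le> card X"
        using reduces unfolding reduces_to_def by auto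
      then obtain Z where "reduces_to ?Y Z" "card Z < card ?Y"
        using less.hyps[OF Y(1-3) rel'] by blast
      then show ?thesis
        using reduces reduces_to_trans Y(4) by fastforce
    qed
  qed
  have "prefix (hd \<alpha>) (concat \<alpha>)" "prefix (hd \<beta>) (concat \<beta>)"
    using less.prems(5,6) by (auto simp: neq_Nil_conv)
  then have "prefix (hd \<alpha>) (hd \<beta>) \<or> prefix (hd \<beta>) (hd \<alpha>)"
    using less.prems(7) prefix_same_cases by metis
  then show ?case
  proof
    assume "prefix (hd \<alpha>) (hd \<beta>)"
    then show ?case
      using shorter_head_first less.prems(3-8) by blast
  next
    assume "prefix (hd \<beta>) (hd \<alpha>)"
    then show ?case
      using shorter_head_first[of \<beta> \<alpha>] less.prems(3-8) by simp
  qed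
qed

lemma reducible_if_split_has_relation:
  assumes X: "finite X" "[] \<notin> X" and x: "h @ g \<in> X" "h \<noteq> []" "g \<noteq> []"
    and rel: "set \<alpha> \<subseteq> insert h (insert g (X - {h @ g}))" "set \<beta> \<subseteq> insert h (insert g (X - {h @ g}))"
      "\<alpha> \<noteq> []" "\<beta> \<noteq> []" "concat \<alpha> = concat \<beta>" "hd \<alpha> \<noteq> hd \<beta>"
  shows "reducible X"
proof -
  let ?X' = "insert h (insert g (X - {h @ g}))"
  obtain Y where Y: "reduces_to ?X' Y" "card Y < card ?X'"
    using defect_theorem[OF _ _ rel] X x by auto
  have "card ?X' \<le> card {h, g} + card (X - {h @ g})"
    using card_Un_le[of "{h, g}" "X - {h @ g}"] by simp
  also have "\<dots> \<le> Suc (Suc (card (X - {h @ g})))"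
    using card_insert_le_m1[of 2 "{g}" h] by simp
  also have "\<dots> = Suc (card X)"
    using card_Suc_Diff1[OF X(1) x(1)] by simp
  finally have "card Y \<le> card X"
    using Y(2) by simp
  have "total_length ?X' \<le> length h + (length g + total_length (X - {h @ g}))"
    using total_length_insert_le[of "insert g (X - {h @ g})" h]
      total_length_insert_le[of "X - {h @ g}" g] X(1) by simp
  also have "\<dots> = total_length X"
    using total_length_remove[OF X(1) x(1)] by simp
  finally have "total_length Y < total_length X"
    using Y(1) unfolding reduces_to_def by simp
  have "?X' \<subseteq> concats Y"
    using Y(1) unfolding reduces_to_def by simp
  then have "X \<subseteq> concats Y"
    using append_in_concats by blast
  then show ?thesis
    using Y(1) \<open>card Y \<le> card X\<close> \<open>total_length Y < total_length X\<close>
    unfolding reducible_def reduces_to_def by blast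
qed

lemma reducible_if_split_relation:
  assumes X: "finite X" "[] \<notin> X" and x: "h @ g \<in> X" "h \<noteq> []" "g \<noteq> []"
    and rel: "set zs \<subseteq> X" "set ms \<subseteq> X" "concat zs = g @ concat ms @ E"
    and E: "E = [] \<or> E = h"
  shows "reducible X"
proof -
  consider "h \<in> X" | "g \<in> X" | "h = g" | "h \<notin> X" "g \<notin> X" "h \<noteq> g"
    by blast
  then show ?thesis
  proof cases
    case 1
    then show ?thesis
      using reducible_if_proper_prefix_or_suffix[OF X 1 x(1)] x(3) by simp
  next
    case 2
    then show ?thesis
      using reducible_if_proper_prefix_or_suffix[OF X 2 x(1)] x(2) by (auto simp: suffix_def)
  next
    case 3
    have "h @ g \<in> concats (insert h (X - {h @ g}))"
      using 3 by (auto intro: append_in_concats in_concats)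
    then show ?thesis
      using reduces_to_replace[OF X x(1) x(2)] 3 x(3) unfolding reducible_def by auto
  next
    case 4
    let ?X' = "insert h (insert g (X - {h @ g}))"
    let ?\<alpha> = "replace (h @ g) [h, g] zs"
      and ?\<beta> = "g # replace (h @ g) [h, g] ms @ (if E = [] then [] else [h])"
    have eq: "concat ?\<alpha> = concat ?\<beta>"
      using rel(3) E by (auto simp: concat_replace)
    have sets: "set ?\<alpha> \<subseteq> ?X'" "set ?\<beta> \<subseteq> ?X'"
      using set_replace[of "h @ g" "[h, g]" zs] set_replace[of "h @ g" "[h, g]" ms] rel(1,2)
      by auto
    obtain z zs' where zs: "zs = z # zs'"
      using rel(3) x(3) by (cases zs) auto
    then have nonempty: "?\<alpha> \<noteq> []" "?\<beta> \<noteq> []"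
      by auto
    have "hd ?\<alpha> \<noteq> hd ?\<beta>"
      using zs rel(1) 4 by auto
    then show ?thesis
      using reducible_if_split_has_relation[OF X x sets nonempty eq] by blast
  qed
qed

section \<open>Block boundaries in a concatenation\<close>

definition block_start :: "'a list list \<Rightarrow> nat \<Rightarrow> nat" where
  "block_start xs i = length (concat (take i xs))"

lemma concat_take_split:
  assumes "i \<le> j"
  shows "concat (take j xs) = concat (take i xs) @ concat (drop i (take j xs))"
proof -
  have "take i (take j xs) = take i xs"
    using assms by (simp add: min_def)
  then show ?thesis
    using append_take_drop_id[of i "take j xs"] by (metis concat_append)
qed

lemma block_start_0 [simp]: "block_start xs 0 = 0"
  by (simp add: block_start_def)

lemma block_start_Suc:
  "i < length xs \<Longrightarrow> block_start xs (Suc i) = block_start xs i + length (xs ! i)"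
  by (simp add: block_start_def take_Suc_conv_app_nth)

lemma block_start_beyond: "length xs \<le> i \<Longrightarrow> block_start xs i = length (concat xs)"
  by (simp add: block_start_def)

lemma block_start_mono: "i \<le> j \<Longrightarrow> block_start xs i \<le> block_start xs j"
  unfolding block_start_def by (simp add: concat_take_split[of i j])

lemma block_start_strict_mono:
  assumes "[] \<notin> set xs" "i < j" "i < length xs"
  shows "block_start xs i < block_start xs j"
proof -
  have "xs ! i \<noteq> []"
    using assms(1,3) nth_mem by metis
  then have "block_start xs i < block_start xs (Suc i)"
    using block_start_Suc[OF assms(3)] by simp
  also have "\<dots> \<le> block_start xs j"
    using assms(2) by (simp add: block_start_mono)
  finally show ?thesis .
qed

lemma block_start_le_length: "block_start xs i \<le> length (concat xs)"
  using block_start_mono[of i "max i (length xs)" xs] block_start_beyond[of xs] by simp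

lemma drop_block_start: "drop (block_start xs i) (concat xs) = concat (drop i xs)"
proof -
  have "concat xs = concat (take i xs) @ concat (drop i xs)"
    by (simp flip: concat_append)
  then show ?thesis
    unfolding block_start_def by (metis append_eq_conv_conj)
qed

lemma length_concat_le_mult:
  "(\<And>x. x \<in> set xs \<Longrightarrow> length x \<le> K) \<Longrightarrow> length (concat xs) \<le> length xs * K"
  by (induction xs) (auto simp: add_mono)

lemma block_start_le_mult:
  "(\<And>x. x \<in> set xs \<Longrightarrow> length x \<le> K) \<Longrightarrow> block_start xs i \<le> i * K"
proof -
  assume "\<And>x. x \<in> set xs \<Longrightarrow> length x \<le> K"
  then have "block_start xs i \<le> length (take i xs) * K"
    unfolding block_start_def by (intro length_concat_le_mult) (auto dest: in_set_takeD)
  also have "\<dots> \<le> i * K"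
    by simp
  finally show ?thesis .
qed

lemma position_in_block:
  assumes "s < length (concat xs)"
  shows "\<exists>i<length xs. block_start xs i \<le> s \<and> s < block_start xs (Suc i)"
proof -
  have "s < block_start xs (length xs)" "\<not> s < block_start xs 0"
    using assms by (simp_all add: block_start_beyond)
  then obtain i where "i < length xs" "\<not> s < block_start xs i" "s < block_start xs (Suc i)"
    using ex_least_nat_less[of "\<lambda>i. s < block_start xs i"] by blast
  then show ?thesis
    by (auto simp: not_less)
qed

lemma drop_take_concat:
  assumes "i \<le> j" "block_start xs i + d \<le> block_start xs j"
  shows "drop (block_start xs i + d) (take (block_start xs j + e) (concat xs)) =
    drop d (concat (drop i (take j xs))) @ take e (concat (drop j xs))"
proof -
  have "concat xs = concat (take j xs) @ concat (drop j xs)"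
    by (simp flip: concat_append)
  then have "take (block_start xs j + e) (concat xs) = concat (take j xs) @ take e (concat (drop j xs))"
    unfolding block_start_def by (metis take_append add_diff_cancel_left' take_all_iff le_add1)
  also have "concat (take j xs) = concat (take i xs) @ concat (drop i (take j xs))"
    using assms(1) by (rule concat_take_split)
  finally show ?thesis
    using assms(2) unfolding block_start_def by (simp add: concat_take_split[OF assms(1)])
qed

lemma drop_take_shift:
  assumes "take l W = take l (drop c W)" "j \<le> l"
  shows "drop i (take j W) = drop (c + i) (take (c + j) W)"
proof -
  have "take j W = take j (take l W)"
    using assms(2) by (simp add: min_def)
  also have "\<dots> = take j (drop c W)"
    using assms by (simp add: min_def)
  also have "\<dots> = drop c (take (c + j) W)"
    by (simp add: take_drop add.commute)
  finally show ?thesis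
    by (simp add: add.commute)
qed

lemma position_inside_block:
  assumes "s < length (concat xs)" "s \<notin> range (block_start xs)"
  shows "\<exists>i d. i < length xs \<and> s = block_start xs i + d \<and> 0 < d \<and> d < length (xs ! i)"
proof -
  obtain i where i: "i < length xs" "block_start xs i \<le> s" "s < block_start xs (Suc i)"
    using position_in_block[OF assms(1)] by blast
  moreover have "block_start xs i \<noteq> s"
    using assms(2) by blast
  ultimately show ?thesis
    using block_start_Suc[OF i(1)]
    by (intro exI[of _ i] exI[of _ "s - block_start xs i"]) auto
qed

section \<open>Misaligned repetitions force a reduction\<close>

text \<open>The factor between the block starts \<open>j1\<close> and \<open>j2\<close> recurs at offset \<open>c\<close>, where it begins
  at offset \<open>d\<close> inside block \<open>i1\<close> and ends at block start \<open>i2\<close> or at offset \<open>d\<close> inside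
  another copy of block \<open>i1\<close>.\<close>

lemma reducible_if_shifted_blocks:
  assumes X: "finite X" "[] \<notin> X" "set xs \<subseteq> X"
    and repeat: "take l (concat xs) = take l (drop c (concat xs))"
    and j: "j1 \<le> j2" "block_start xs j2 \<le> l"
    and i: "i1 < i2" "i1 < length xs"
    and start: "c + block_start xs j1 = block_start xs i1 + d" "0 < d" "d < length (xs ! i1)"
    and stop: "c + block_start xs j2 = block_start xs i2 + e"
    and e: "e = 0 \<or> e = d \<and> i2 < length xs \<and> xs ! i2 = xs ! i1"
  shows "reducible X"
proof -
  define x where "x = xs ! i1"
  define ms where "ms = drop (Suc i1) (take i2 xs)"
  define E where "E = take e (concat (drop i2 xs))"
  have "block_start xs i1 + d \<le> block_start xs i2"
    using block_start_Suc[OF i(2)] block_start_mono[of "Suc i1" i2 xs] start(3) i(1) by simp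
  then have "drop (c + block_start xs j1) (take (c + block_start xs j2) (concat xs)) =
      drop d (concat (drop i1 (take i2 xs))) @ E"
    unfolding start(1) stop E_def using i(1) by (intro drop_take_concat) simp_all
  also have "drop i1 (take i2 xs) = x # ms"
    unfolding x_def ms_def using Cons_nth_drop_Suc[of i1 "take i2 xs"] i by simp
  finally have "drop (c + block_start xs j1) (take (c + block_start xs j2) (concat xs)) =
      drop d x @ concat ms @ E"
    using start(3) x_def by simp
  moreover have "concat (drop j1 (take j2 xs)) =
      drop (block_start xs j1) (take (block_start xs j2) (concat xs))"
    using drop_take_concat[of j1 j2 xs 0 0] j(1) by (simp add: block_start_mono)
  ultimately have relation: "concat (drop j1 (take j2 xs)) = drop d x @ concat ms @ E"
    using drop_take_shift[OF repeat j(2)] by simp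
  have "E = [] \<or> E = take d x"
  proof (cases "e = 0")
    case False
    then have "drop i2 xs = x # drop (Suc i2) xs" "e = d"
      using e Cons_nth_drop_Suc[of i2 xs] x_def by auto
    then show ?thesis
      unfolding E_def using start(3) x_def by simp
  qed (simp add: E_def)
  moreover have "take d x @ drop d x \<in> X" "take d x \<noteq> []" "drop d x \<noteq> []"
    using X(3) i(2) start(2,3) unfolding x_def by auto
  moreover have "set (drop j1 (take j2 xs)) \<subseteq> X" "set ms \<subseteq> X"
    using X(3) unfolding ms_def by (auto dest: in_set_dropD in_set_takeD)
  ultimately show ?thesis
    using reducible_if_split_relation[OF X(1,2)] relation by metis
qed

lemma reducible_if_shift_reaches_block_start:
  assumes X: "finite X" "[] \<notin> X" "set xs \<subseteq> X"
    and repeat: "take l (concat xs) = take l (drop c (concat xs))"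
    and misaligned: "c \<notin> range (block_start xs)"
    and reaches: "c + block_start xs n \<in> range (block_start xs)" "block_start xs n \<le> l"
  shows "reducible X"
proof -
  obtain k where k: "k < n" "c + block_start xs k \<notin> range (block_start xs)"
      "c + block_start xs (Suc k) \<in> range (block_start xs)"
    using ex_least_nat_less[of "\<lambda>j. c + block_start xs j \<in> range (block_start xs)" n]
      reaches(1) misaligned by auto
  obtain i2 where i2: "c + block_start xs (Suc k) = block_start xs i2"
    using k(3) by auto
  have "block_start xs k \<noteq> block_start xs (Suc k)"
    using k(2,3) by metis
  then have step: "block_start xs k < block_start xs (Suc k)"
    using block_start_mono[of k "Suc k" xs] by simp
  then have "c + block_start xs k < length (concat xs)"
    using i2 block_start_le_length[of xs i2] by simp
  then obtain i1 d where i1: "i1 < length xs" "c + block_start xs k = block_start xs i1 + d"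
      "0 < d" "d < length (xs ! i1)"
    using position_inside_block k(2) by blast
  have "i1 < i2"
  proof (rule ccontr)
    assume "\<not> i1 < i2"
    then have "block_start xs i2 \<le> block_start xs i1"
      by (simp add: block_start_mono)
    then show False
      using i1(2) i2 step by simp
  qed
  moreover have "block_start xs (Suc k) \<le> l"
    using block_start_mono[of "Suc k" n xs] k(1) reaches(2) by simp
  ultimately show ?thesis
    using reducible_if_shifted_blocks[OF X repeat, of k "Suc k" i1 i2 d 0] i1 i2 by simp
qed

lemma pigeonhole_lessThan:
  assumes "finite S" "card S < n" "\<And>j. j < n \<Longrightarrow> f j \<in> S"
  shows "\<exists>j1 j2. j1 < j2 \<and> j2 < n \<and> f j1 = f j2"
proof -
  have "card (f ` {..<n}) \<le> card S"
    using assms(1,3) by (intro card_mono) auto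
  then have "\<not> inj_on f {..<n}"
    using pigeonhole[of f "{..<n}"] assms(2) by simp
  then obtain a b where "a < n" "b < n" "a \<noteq> b" "f a = f b"
    unfolding inj_on_def by auto
  then show ?thesis
    by (metis linorder_neqE_nat)
qed

lemma card_interior_offsets:
  assumes "finite X" "[] \<notin> X" "X \<noteq> {}"
  shows "card (SIGMA x:X. {0<..<length x}) < total_length X"
proof -
  have "card (SIGMA x:X. {0<..<length x}) = (\<Sum>x\<in>X. length x - 1)"
    using assms(1) by (simp add: card_SigmaI)
  also have "\<dots> < total_length X"
    unfolding total_length_def
  proof (rule sum_strict_mono)
    show "length x - 1 < length x" if "x \<in> X" for x
      using that assms(2) by (cases x) auto
  qed (use assms in auto)
  finally show ?thesis .
qed

lemma reducible_if_shift_avoids_block_starts: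
  assumes X: "finite X" "[] \<notin> X" "set xs \<subseteq> X" "xs \<noteq> []"
    and repeat: "take l (concat xs) = take l (drop c (concat xs))"
    and room: "c + l \<le> length (concat xs)"
    and n: "total_length X \<le> n" "n \<le> length xs" "block_start xs n \<le> l"
    and avoids: "\<And>j. j < n \<Longrightarrow> c + block_start xs j \<notin> range (block_start xs)"
  shows "reducible X"
proof -
  have "[] \<notin> set xs"
    using X(2,3) by blast
  have "c + block_start xs j < length (concat xs)" if "j < n" for j
    using block_start_strict_mono[OF \<open>[] \<notin> set xs\<close>, of j n] that n room by simp
  then have "\<exists>i d. i < length xs \<and> c + block_start xs j = block_start xs i + d \<and> 0 < d \<and>
      d < length (xs ! i)" if "j < n" for j
    using position_inside_block avoids that by blast
  then obtain blk off where blk: "\<And>j. j < n \<Longrightarrow> blk j < length xs \<and>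
      c + block_start xs j = block_start xs (blk j) + off j \<and> 0 < off j \<and> off j < length (xs ! blk j)"
    by metis
  have "(xs ! blk j, off j) \<in> (SIGMA x:X. {0<..<length x})" if "j < n" for j
    using blk[OF that] X(3) by auto
  moreover have "card (SIGMA x:X. {0<..<length x}) < n"
    using card_interior_offsets[OF X(1,2)] X(3,4) n(1) by fastforce
  ultimately obtain j1 j2 where j: "j1 < j2" "j2 < n" "xs ! blk j1 = xs ! blk j2" "off j1 = off j2"
    using pigeonhole_lessThan[of "SIGMA x:X. {0<..<length x}" n "\<lambda>j. (xs ! blk j, off j)"] X(1)
    by (auto simp: finite_SigmaI)
  have "block_start xs j1 < block_start xs j2"
    using block_start_strict_mono[OF \<open>[] \<notin> set xs\<close>, of j1 j2] j n(2) by simp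
  then have "block_start xs (blk j1) < block_start xs (blk j2)"
    using blk[of j1] blk[of j2] j by simp
  then have "blk j1 < blk j2"
    by (meson block_start_mono not_le)
  moreover have "block_start xs j2 \<le> l"
    using block_start_mono[of j2 n xs] j(2) n(3) by simp
  ultimately show ?thesis
    using reducible_if_shifted_blocks[OF X(1-3) repeat, of j1 j2 "blk j1" "blk j2" "off j1" "off j1"]
      blk[of j1] blk[of j2] j by auto
qed

lemma reducible_if_misaligned_repeat:
  assumes X: "finite X" "[] \<notin> X" "set xs \<subseteq> X"
    and repeat: "take l (concat xs) = take l (drop c (concat xs))"
    and misaligned: "c \<notin> range (block_start xs)"
    and room: "c + l \<le> length (concat xs)"
    and long: "total_length X ^ 2 \<le> l"
  shows "reducible X"
proof -
  define K where "K = total_length X"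
  have short: "length x \<le> K" if "x \<in> set xs" for x
    using X(1,3) that unfolding K_def total_length_def by (auto intro: member_le_sum)
  have "c \<noteq> 0"
    using misaligned by (metis block_start_0 rangeI)
  then have "xs \<noteq> []"
    using room by auto
  have KK: "K * K \<le> l"
    using long by (simp add: K_def power2_eq_square)
  have "K \<le> length xs"
  proof (rule ccontr)
    assume "\<not> K \<le> length xs"
    then have "length xs * K \<le> K * K"
      by (intro mult_le_mono1) simp
    then have "length (concat xs) \<le> K * K"
      using length_concat_le_mult[of xs K, OF short] by linarith
    then show False
      using KK room \<open>c \<noteq> 0\<close> by simp
  qed
  have "block_start xs K \<le> l"
    using block_start_le_mult[of xs K K] short KK by simp
  show ?thesis
  proof (cases "\<exists>j<K. c + block_start xs j \<in> range (block_start xs)")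
    case True
    then obtain j where "j < K" "c + block_start xs j \<in> range (block_start xs)"
      by blast
    moreover have "block_start xs j \<le> l"
      using block_start_mono[of j K xs] \<open>j < K\<close> \<open>block_start xs K \<le> l\<close> by simp
    ultimately show ?thesis
      using reducible_if_shift_reaches_block_start[OF X repeat misaligned] by blast
  next
    case False
    then show ?thesis
      using reducible_if_shift_avoids_block_starts[OF X \<open>xs \<noteq> []\<close> repeat room, of K]
        \<open>K \<le> length xs\<close> \<open>block_start xs K \<le> l\<close> K_def by blast
  qed
qed

section \<open>Factoring the morphism\<close>

lemma factor_of_coarser_factorization:
  assumes eq: "concat xs = concat ys"
    and aligned: "range (block_start ys) \<subseteq> range (block_start xs)"
    and y: "y \<in> set ys" "y \<noteq> []"
  shows "\<exists>zs. set zs \<subseteq> set xs \<and> zs \<noteq> [] \<and> concat zs = y"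
proof -
  obtain i where i: "i < length ys" "ys ! i = y"
    using y(1) by (auto simp: in_set_conv_nth)
  obtain i' j' where ij: "block_start ys i = block_start xs i'" "block_start ys (Suc i) = block_start xs j'"
    using aligned by blast
  have "y = drop (block_start ys i) (take (block_start ys (Suc i)) (concat ys))"
    using drop_take_concat[of i "Suc i" ys 0 0] i by (simp add: block_start_mono take_Suc_conv_app_nth)
  then have y_eq: "y = drop (block_start xs i') (take (block_start xs j') (concat xs))"
    using ij eq by simp
  have "i' \<le> j'"
  proof (rule ccontr)
    assume "\<not> i' \<le> j'"
    then have "block_start xs j' \<le> block_start xs i'"
      by (simp add: block_start_mono)
    then show False
      using y_eq y(2) by simp
  qed
  then have "y = concat (drop i' (take j' xs))"
    using drop_take_concat[of i' j' xs 0 0] y_eq by (simp add: block_start_mono)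
  then show ?thesis
    using y(2) by (intro exI[of _ "drop i' (take j' xs)"]) (auto dest: in_set_dropD in_set_takeD)
qed

lemma block_starts_aligned_if_irreducible:
  assumes X: "finite X" "[] \<notin> X" "set xs \<subseteq> X" "\<not> reducible X"
    and long: "total_length X ^ 2 \<le> length u"
    and eq: "concat xs = concat ys"
    and starts: "\<And>y. y \<in> set ys \<Longrightarrow> prefix u y"
  shows "range (block_start ys) \<subseteq> range (block_start xs)"
proof -
  have "block_start ys i \<in> range (block_start xs)" for i
  proof (rule ccontr)
    assume misaligned: "block_start ys i \<notin> range (block_start xs)"
    let ?c = "block_start ys i"
    have "i < length ys"
    proof (rule ccontr)
      assume "\<not> i < length ys"
      then have "?c = block_start xs (length xs)"
        using eq by (simp add: block_start_beyond)
      then show False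
        using misaligned by blast
    qed
    moreover have "ys \<noteq> []"
      using \<open>i < length ys\<close> by auto
    ultimately have "prefix u (ys ! i)" "prefix u (hd ys)"
      using starts nth_mem hd_in_set by blast+
    moreover have "drop ?c (concat xs) = ys ! i @ concat (drop (Suc i) ys)"
      using eq drop_block_start[of ys i] Cons_nth_drop_Suc[OF \<open>i < length ys\<close>, symmetric] by simp
    moreover have "concat xs = hd ys @ concat (tl ys)"
      using eq \<open>i < length ys\<close> by (cases ys) auto
    ultimately obtain z z' where z: "drop ?c (concat xs) = u @ z" "concat xs = u @ z'"
      unfolding prefix_def by auto
    then have repeat: "take (length u) (concat xs) = take (length u) (drop ?c (concat xs))"
      by simp
    have "?c \<le> length (concat xs)"
      using block_start_le_length[of ys i] eq by simp
    then have "?c + length u \<le> length (concat xs)"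
      using arg_cong[OF z(1), of length] by simp
    with repeat show False
      using reducible_if_misaligned_repeat[OF X(1-3) _ misaligned _ long] X(4) by blast
  qed
  then show ?thesis
    by blast
qed

definition factors_properly :: "'b set \<Rightarrow> 'c set \<Rightarrow> ('b \<Rightarrow> 'c list) \<Rightarrow> nat \<Rightarrow> bool" where
  "factors_properly B C \<tau> n \<longleftrightarrow>
    (\<exists>(D :: nat set) q p. finite D \<and> card D \<le> n \<and> morph B D q \<and> morph D C p \<and>
       (\<forall>b\<in>B. ext p (q b) = \<tau> b) \<and> letter_onto B D q \<and> proper B D q)"

lemma factors_properly_mono:
  "factors_properly B C \<tau> m \<Longrightarrow> m \<le> n \<Longrightarrow> factors_properly B C \<tau> n"
  unfolding factors_properly_def by (blast intro: le_trans)

lemma proper_if_common_ends: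
  assumes "B \<noteq> {}" and q: "\<And>b. b \<in> B \<Longrightarrow> q b \<noteq> [] \<and> set (q b) \<subseteq> D"
    and ends: "\<And>b b'. b \<in> B \<Longrightarrow> b' \<in> B \<Longrightarrow> hd (q b) = hd (q b') \<and> last (q b) = last (q b')"
  shows "proper B D q"
proof -
  obtain b0 where "b0 \<in> B"
    using assms(1) by blast
  have "prefix [hd (q b0)] (q b) \<and> suffix [last (q b0)] (q b)" if "b \<in> B" for b
  proof
    have "q b \<noteq> []" "hd (q b) = hd (q b0)" "last (q b) = last (q b0)"
      using q[OF that] ends[OF that \<open>b0 \<in> B\<close>] by simp_all
    then have hd: "q b = hd (q b0) # tl (q b)" and last: "q b = butlast (q b) @ [last (q b0)]"
      by (metis hd_Cons_tl, metis append_butlast_last_id)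
    show "prefix [hd (q b0)] (q b)"
      by (subst hd) simp
    show "suffix [last (q b0)] (q b)"
      using last by (rule suffixI)
  qed
  moreover have "hd (q b0) \<in> D" "last (q b0) \<in> D"
    using q[OF \<open>b0 \<in> B\<close>] by auto
  ultimately show ?thesis
    unfolding proper_def r_proper_def by (intro exI[of _ "[hd (q b0)]"] exI[of _ "[last (q b0)]"]) simp
qed

lemma factors_properly_if_common_ends:
  assumes X: "finite X" "[] \<notin> X" and "B \<noteq> {}" and \<tau>: "morph B C \<tau>"
    and F: "\<And>b. b \<in> B \<Longrightarrow> set (F b) \<subseteq> X \<and> F b \<noteq> [] \<and> concat (F b) = \<tau> b"
    and ends: "\<And>b b'. b \<in> B \<Longrightarrow> b' \<in> B \<Longrightarrow> hd (F b) = hd (F b') \<and> last (F b) = last (F b')"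
  shows "factors_properly B C \<tau> (card X)"
proof -
  define U where "U = (\<Union>b\<in>B. set (F b))"
  have "U \<subseteq> X"
    using F by (auto simp: U_def)
  then obtain p where p: "bij_betw p {0..<card U} U"
    using ex_bij_betw_nat_finite finite_subset X(1) by blast
  define D where "D = {0..<card U}"
  define g where "g = inv_into D p"
  define q where "q b = map g (F b)" for b
  have pD: "p ` D = U" and gU: "g ` U = D" and pg: "\<And>x. x \<in> U \<Longrightarrow> p (g x) = x"
    using p bij_betw_inv_into[OF p] bij_betw_inv_into_right[OF p]
    unfolding D_def g_def bij_betw_def by auto
  have words: "x \<noteq> [] \<and> set x \<subseteq> C" if x: "x \<in> U" for x
  proof -
    obtain b where b: "b \<in> B" "x \<in> set (F b)"
      using x by (auto simp: U_def)
    then have "set x \<subseteq> set (concat (F b))"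
      by auto
    then have "set x \<subseteq> set (\<tau> b)"
      using F[OF b(1)] by simp
    then show ?thesis
      using F[OF b(1)] b X(2) \<tau> unfolding morph_def plus_def by auto
  qed
  have "card D \<le> card X"
    unfolding D_def using card_mono[OF X(1) \<open>U \<subseteq> X\<close>] by simp
  moreover have "morph D C p"
    using words pD unfolding morph_def plus_def by auto
  moreover have "morph B D q"
    using F gU unfolding morph_def plus_def q_def U_def by auto
  moreover have "\<forall>b\<in>B. ext p (q b) = \<tau> b"
  proof
    fix b assume "b \<in> B"
    then have "map p (q b) = F b"
      unfolding q_def map_map using pg by (intro map_idI) (auto simp: U_def)
    then show "ext p (q b) = \<tau> b"
      using F[OF \<open>b \<in> B\<close>] unfolding ext_def by simp
  qed
  moreover have "letter_onto B D q"
    using gU unfolding letter_onto_def q_def U_def by auto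
  moreover have "proper B D q"
  proof (rule proper_if_common_ends[OF \<open>B \<noteq> {}\<close>])
    show "q b \<noteq> [] \<and> set (q b) \<subseteq> D" if "b \<in> B" for b
      using F[OF that] gU that unfolding q_def U_def by auto
    show "hd (q b) = hd (q b') \<and> last (q b) = last (q b')" if "b \<in> B" "b' \<in> B" for b b'
      using ends[OF that] F[OF that(1)] F[OF that(2)] by (simp add: q_def hd_map last_map)
  qed
  ultimately show ?thesis
    unfolding factors_properly_def D_def by blast
qed

lemma hd_eq_if_irreducible:
  assumes X: "finite X" "[] \<notin> X" "\<not> reducible X" and short: "\<forall>x\<in>X. length x \<le> length u"
    and "set zs \<subseteq> X" "zs \<noteq> []" "prefix u (concat zs)"
    and "set zs' \<subseteq> X" "zs' \<noteq> []" "prefix u (concat zs')"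
  shows "hd zs = hd zs'"
proof -
  have hd_prefix: "prefix (hd ws) u" "hd ws \<in> X"
    if "set ws \<subseteq> X" "ws \<noteq> []" "prefix u (concat ws)" for ws
  proof -
    show "hd ws \<in> X"
      using that(1,2) by auto
    moreover have "prefix (hd ws) (concat ws)"
      using that(2) by (cases ws) auto
    ultimately show "prefix (hd ws) u"
      using prefix_length_prefix that(3) short by blast
  qed
  show ?thesis
    using hd_prefix[of zs] hd_prefix[of zs'] reducible_if_prefixes_differ[OF X(1,2)] assms by blast
qed

lemma last_eq_if_irreducible:
  assumes X: "finite X" "[] \<notin> X" "\<not> reducible X" and short: "\<forall>x\<in>X. length x \<le> length v"
    and "set zs \<subseteq> X" "zs \<noteq> []" "suffix v (concat zs)"
    and "set zs' \<subseteq> X" "zs' \<noteq> []" "suffix v (concat zs')"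
  shows "last zs = last zs'"
proof -
  have last_suffix: "suffix (last ws) v" "last ws \<in> X"
    if "set ws \<subseteq> X" "ws \<noteq> []" "suffix v (concat ws)" for ws
  proof -
    show "last ws \<in> X"
      using that(1,2) by auto
    moreover have "concat ws = concat (butlast ws) @ last ws"
      using that(2) concat_append[of "butlast ws" "[last ws]"] by simp
    then have "suffix (last ws) (concat ws)"
      unfolding suffix_def by blast
    ultimately show "suffix (last ws) v"
      using suffix_length_suffix that(3) short by blast
  qed
  show ?thesis
    using last_suffix[of zs] last_suffix[of zs'] reducible_if_suffixes_differ[OF X(1,2)] assms by blast
qed

lemma factors_properly_if_irreducible:
  assumes \<tau>: "morph B C \<tau>" and ys: "ys \<in> plusplus B"
    and uv: "length u = l" "length v = l" "\<forall>b\<in>B. prefix u (\<tau> b) \<and> suffix v (\<tau> b)"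
    and X: "finite X" "[] \<notin> X" "set xs \<subseteq> X" "\<not> reducible X"
    and long: "total_length X ^ 2 \<le> l"
    and eq: "concat xs = concat (map \<tau> ys)"
  shows "factors_properly B C \<tau> (card X)"
proof -
  have ys_B: "set ys = B" "ys \<noteq> []"
    using ys unfolding plusplus_def plus_def by auto
  have aligned: "range (block_start (map \<tau> ys)) \<subseteq> range (block_start xs)"
    using block_starts_aligned_if_irreducible[OF X long[folded uv(1)] eq] uv(3) ys_B by auto
  have "\<forall>b\<in>B. \<exists>zs. set zs \<subseteq> X \<and> zs \<noteq> [] \<and> concat zs = \<tau> b"
  proof
    fix b assume "b \<in> B"
    then have "\<tau> b \<in> set (map \<tau> ys)" "\<tau> b \<noteq> []"
      using ys_B \<tau> unfolding morph_def plus_def by auto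
    then obtain zs where "set zs \<subseteq> set xs" "zs \<noteq> []" "concat zs = \<tau> b"
      using factor_of_coarser_factorization[OF eq aligned] by blast
    then show "\<exists>zs. set zs \<subseteq> X \<and> zs \<noteq> [] \<and> concat zs = \<tau> b"
      using X(3) by auto
  qed
  then obtain F where F: "\<forall>b\<in>B. set (F b) \<subseteq> X \<and> F b \<noteq> [] \<and> concat (F b) = \<tau> b"
    by (rule bchoice[THEN exE])
  have "length x \<le> l" if "x \<in> X" for x
  proof -
    have "length x \<le> total_length X"
      using X(1) that unfolding total_length_def by (auto intro: member_le_sum)
    also have "\<dots> \<le> total_length X * total_length X"
      by (rule le_square)
    also have "\<dots> \<le> l"
      using long by (simp add: power2_eq_square)
    finally show ?thesis .
  qed
  then have short: "\<forall>x\<in>X. length x \<le> length u" "\<forall>x\<in>X. length x \<le> length v"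
    using uv(1,2) by auto
  have common_ends: "hd (F b) = hd (F b') \<and> last (F b) = last (F b')" if "b \<in> B" "b' \<in> B" for b b'
    using hd_eq_if_irreducible[OF X(1,2,4) short(1)] last_eq_if_irreducible[OF X(1,2,4) short(2)]
      F uv(3) that by simp
  show ?thesis
  proof (rule factors_properly_if_common_ends[OF X(1,2) _ \<tau>])
    show "B \<noteq> {}"
      using ys_B by auto
    show "set (F b) \<subseteq> X \<and> F b \<noteq> [] \<and> concat (F b) = \<tau> b" if "b \<in> B" for b
      using F that by blast
  qed (rule common_ends)
qed

lemma factors_properly_if_common_image:
  assumes \<tau>: "morph B C \<tau>" and ys: "ys \<in> plusplus B"
    and uv: "length u = l" "length v = l" "\<forall>b\<in>B. prefix u (\<tau> b) \<and> suffix v (\<tau> b)"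
  shows "finite X \<Longrightarrow> [] \<notin> X \<Longrightarrow> set xs \<subseteq> X \<Longrightarrow> total_length X ^ 2 \<le> l \<Longrightarrow>
    concat xs = concat (map \<tau> ys) \<Longrightarrow> factors_properly B C \<tau> (card X)"
proof (induction "total_length X" arbitrary: X xs rule: less_induct)
  case less
  show ?case
  proof (cases "reducible X")
    case True
    then obtain Y where Y: "reduces_to X Y"
      unfolding reducible_def by blast
    have "concat xs \<in> concats Y"
      using concat_in_concats[OF less.prems(3)] concats_subset Y unfolding reduces_to_def by auto
    then obtain xs' where xs': "set xs' \<subseteq> Y" "concat xs' = concat xs"
      unfolding concats_def by (auto simp: lists_eq_set)
    have "total_length Y \<le> total_length X"
      using Y unfolding reduces_to_def by simp
    then have "total_length Y ^ 2 \<le> total_length X ^ 2"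
      by (rule power_mono) simp
    then have "total_length Y ^ 2 \<le> l"
      using less.prems(4) by linarith
    then have "factors_properly B C \<tau> (card Y)"
      using less.hyps[of Y xs'] Y xs' less.prems(5) unfolding reduces_to_def by simp
    moreover have "card Y \<le> card X"
      using Y unfolding reduces_to_def by simp
    ultimately show ?thesis
      by (rule factors_properly_mono)
  next
    case False
    show ?thesis
      by (rule factors_properly_if_irreducible[OF \<tau> ys uv less.prems(1-3) False less.prems(4,5)])
  qed
qed

lemma ext_ext: "(\<And>b. b \<in> set w \<Longrightarrow> ext p (q b) = \<tau> b) \<Longrightarrow> ext p (ext q w) = ext \<tau> w"
  unfolding ext_def by (induction w) auto

lemma factors_properly_on_words:
  assumes "factors_properly B C \<tau> n" "n \<le> m"
  shows "\<exists>(D :: nat set) q p. finite D \<and> morph B D q \<and> morph D C p \<and> card D \<le> m \<and>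
    (\<forall>w\<in>plus B. ext p (ext q w) = ext \<tau> w) \<and> letter_onto B D q \<and> proper B D q"
proof -
  obtain D :: "nat set" and q p where D: "finite D" "morph B D q" "morph D C p"
      "letter_onto B D q" "proper B D q" "card D \<le> n" and comp: "\<forall>b\<in>B. ext p (q b) = \<tau> b"
    using assms(1) unfolding factors_properly_def by blast
  have "\<forall>w\<in>plus B. ext p (ext q w) = ext \<tau> w"
  proof (intro ballI ext_ext)
    fix w b assume "w \<in> plus B" "b \<in> set w"
    then show "ext p (q b) = \<tau> b"
      using comp unfolding plus_def by auto
  qed
  then show ?thesis
    using D assms(2) by (intro exI[of _ D] exI[of _ q] exI[of _ p]) simp
qed

lemma total_length_image_le: "finite A \<Longrightarrow> total_length (\<phi> ` A) \<le> size1 A \<phi>"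
  unfolding total_length_def size1_def using sum_image_le[of A length \<phi>] by simp

theorem lemma3p6:
  fixes A :: "'a set" and B :: "'b set" and C :: "'c set"
    and \<phi> :: "'a \<Rightarrow> 'c list" and \<tau> :: "'b \<Rightarrow> 'c list" and l :: nat
  assumes "finite A" and "finite B" and "finite C"
    and "morph A C \<phi>" and "morph B C \<tau>"
    and "r_proper l B C \<tau>" and "l \<ge> size1 A \<phi> ^ 4"
    and "\<exists>x\<in>plus A. \<exists>y\<in>plusplus B. ext \<phi> x = ext \<tau> y"
  shows "\<exists>(D :: nat set) (q :: 'b \<Rightarrow> nat list) (p :: nat \<Rightarrow> 'c list).
           finite D \<and> morph B D q \<and> morph D C p \<and>
           card D \<le> card A \<and>
           (\<forall>w\<in>plus B. ext p (ext q w) = ext \<tau> w) \<and>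
           letter_onto B D q \<and> proper B D q"
proof -
  obtain x y where x: "x \<in> plus A" and y: "y \<in> plusplus B" and xy: "ext \<phi> x = ext \<tau> y"
    using assms(8) by blast
  obtain u v where uv: "length u = l" "length v = l" "\<forall>b\<in>B. prefix u (\<tau> b) \<and> suffix v (\<tau> b)"
    using assms(6) unfolding r_proper_def by blast
  have "total_length (\<phi> ` A) ^ 2 \<le> size1 A \<phi> ^ 2"
    using total_length_image_le[OF assms(1)] by (simp add: power_mono)
  also have "\<dots> \<le> size1 A \<phi> ^ 4"
    using le_square[of "size1 A \<phi> ^ 2"] by (simp flip: power_add)
  finally have long: "total_length (\<phi> ` A) ^ 2 \<le> l"
    using assms(7) by linarith
  have X: "[] \<notin> \<phi> ` A" "set (map \<phi> x) \<subseteq> \<phi> ` A"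
    using assms(4) x unfolding morph_def plus_def by auto
  have "concat (map \<phi> x) = concat (map \<tau> y)"
    using xy unfolding ext_def .
  then have "factors_properly B C \<tau> (card (\<phi> ` A))"
    by (rule factors_properly_if_common_image[OF assms(5) y uv finite_imageI[OF assms(1)] X long])
  then show ?thesis
    by (rule factors_properly_on_words[OF _ card_image_le[OF assms(1)]])
qed

end
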